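(* Fix $\varepsilon>0$ and $\lambda<\lambda_c$, and let $\pi_c=\lambda n^{-\eta_s}$. For distinct $i,j\in[n]$ let $f_{2k}(i,j)$ be the probability that there is a path of length $2k$ from $i$ to $j$ in $\mathrm{NR}_n(\mathbf w,\pi_c)$. There exist $n_0=n_0(\varepsilon)\ge1$ and $b=b(\varepsilon)\in(1/2,\alpha)$ such that for all $n\ge n_0$, all $k\ge1$ and all distinct $i,j\in[n]$, $$f_{2k}(i,j)\le(1+\varepsilon)^{2k}\Big(\frac{\lambda}{\lambda_c}\Big)^{2k}\frac{1}{(i\wedge j)^{1-b}(i\vee j)^{b}}.$$
   Context: Fix $\tau\in(2,3)$, $\alpha=1/(\tau-1)$, $\eta_s=(3-\tau)/2$, $\eta=(3-\tau)/(\tau-1)$. Let $F$ be a distribution function with $1-F(w)=Cw^{-(\tau-1)}$ on its support for some $C>0$, $\mu$ its mean, $w_i=[1-F]^{-1}(i/n)$, so $n^{-\alpha}w_i=c_{\mathrm F}i^{-\alpha}$; $\ell_n=\sum_iw_i$. $\mathrm{NR}_n(\mathbf w)$ on $[n]$ has edge $\{i,j\}$ independently with probability $1-e^{-w_iw_j/\ell_n}$; $\mathrm{NR}_n(\mathbf w,\pi)$ retains each edge independently with probability $\pi$. $A_\alpha=\int_0^\infty(1-e^{-z})z^{-1/\alpha}dz$, $B_\alpha=c_{\mathrm F}^{2/\alpha}A_\alpha/(\alpha\mu^{1/\alpha})$, $\lambda_c=\sqrt{\eta/(4B_\alpha)}$. *)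

theory Defs
  imports "HOL-Analysis.Analysis"
begin

definition alpha :: "real \<Rightarrow> real" where
  "alpha tau = 1 / (tau - 1)"

definition eta_s :: "real \<Rightarrow> real" where
  "eta_s tau = (3 - tau) / 2"

definition eta :: "real \<Rightarrow> real" where
  "eta tau = (3 - tau) / (tau - 1)"

definition paretoF :: "real \<Rightarrow> real \<Rightarrow> real \<Rightarrow> real" where
  "paretoF tau C x = (if x < C powr (alpha tau) then 0 else 1 - C * x powr (-(tau - 1)))"

text \<open>Mean of the nonnegative distribution F: integral of 1 - F over [0, infinity).\<close>
definition mu :: "real \<Rightarrow> real \<Rightarrow> real" where
  "mu tau C = integral {0..} (\<lambda>x. 1 - paretoF tau C x)"

text \<open>c_F: w_i = [1-F]^{-1}(i/n) = (C n / i)^alpha, i.e. n^{-alpha} w_i = c_F i^{-alpha}.\<close>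
definition cF :: "real \<Rightarrow> real \<Rightarrow> real" where
  "cF tau C = C powr (alpha tau)"

definition weight :: "real \<Rightarrow> real \<Rightarrow> nat \<Rightarrow> nat \<Rightarrow> real" where
  "weight tau C n i = cF tau C * real n powr (alpha tau) * real i powr (- alpha tau)"

definition ell :: "real \<Rightarrow> real \<Rightarrow> nat \<Rightarrow> real" where
  "ell tau C n = (\<Sum>i=1..n. weight tau C n i)"

definition A_alpha :: "real \<Rightarrow> real" where
  "A_alpha a = integral {0<..} (\<lambda>z. (1 - exp (- z)) * z powr (- (1 / a)))"

definition B_alpha :: "real \<Rightarrow> real \<Rightarrow> real" where
  "B_alpha tau C = cF tau C powr (2 / alpha tau) * A_alpha (alpha tau)
                    / (alpha tau * mu tau C powr (1 / alpha tau))"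

definition lambda_c :: "real \<Rightarrow> real \<Rightarrow> real" where
  "lambda_c tau C = sqrt (eta tau / (4 * B_alpha tau C))"

definition pairs :: "nat \<Rightarrow> (nat \<times> nat) set" where
  "pairs n = {(a, b). 1 \<le> a \<and> a < b \<and> b \<le> n}"

definition adj :: "(nat \<times> nat) set \<Rightarrow> nat \<Rightarrow> nat \<Rightarrow> bool" where
  "adj E a b \<longleftrightarrow> a \<noteq> b \<and> (min a b, max a b) \<in> E"

definition has_path :: "(nat \<times> nat) set \<Rightarrow> nat \<Rightarrow> nat \<Rightarrow> nat \<Rightarrow> bool" where
  "has_path E m i j \<longleftrightarrow> (\<exists>v :: nat \<Rightarrow> nat. v 0 = i \<and> v m = j \<and> inj_on v {0..m}
      \<and> (\<forall>t<m. adj E (v t) (v (Suc t))))"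

definition edge_prob :: "real \<Rightarrow> real \<Rightarrow> real \<Rightarrow> nat \<Rightarrow> nat \<times> nat \<Rightarrow> real" where
  "edge_prob tau C p n e = p * (1 - exp (- weight tau C n (fst e) * weight tau C n (snd e) / ell tau C n))"

text \<open>Probability of an event Q (a property of the edge set) in the random graph with
  independent edges, edge e present with probability q e.\<close>
definition graph_prob :: "((nat \<times> nat) \<Rightarrow> real) \<Rightarrow> nat \<Rightarrow> ((nat \<times> nat) set \<Rightarrow> bool) \<Rightarrow> real" where
  "graph_prob q n Q = (\<Sum>E\<in>Pow (pairs n). if Q E then
       (\<Prod>e\<in>E. q e) * (\<Prod>e\<in>pairs n - E. 1 - q e) else 0)"

definition path_prob :: "real \<Rightarrow> real \<Rightarrow> real \<Rightarrow> nat \<Rightarrow> nat \<Rightarrow> nat \<Rightarrow> nat \<Rightarrow> real" where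
  "path_prob tau C lam n m i j =
     graph_prob (edge_prob tau C (lam * real n powr (- eta_s tau)) n) n (\<lambda>E. has_path E m i j)"

end

theory Submission
  imports Defs
begin

text \<open>
  By the union bound over walks, f_2k(i, j) is at most the (i, j) entry of P^(2k), where
  P a c = pi (1 - exp (- kappa (a c)^(-alpha))) and kappa = c_F^2 n^(2 alpha) / ell_n.
  Comparing sums with integrals (Tonelli and the Gamma integral) gives
  sum_m P l m m^(-c) <= pi l^(c - 1) I(c) with I(c) = kappa^((1 - c)/alpha) Gamma(1 - (1 - c)/alpha) / (1 - c),
  so the two-step kernel P^2 maps the profile m^(-c) to pi^2 I(c) I(1 - c) i^(-c).
  Induction on k with the profile i^(-c) j^(c - 1), for c = b and c = 1 - b, bounds P^(2k) i j
  by (pi^2 I(b) I(1 - b))^k / ((min i j)^(1 - b) (max i j)^b).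
  Since ell_n ~ mu n, the factor pi^2 I(b) I(1 - b) tends to
  lambda^2 c_F^(2/alpha) mu^(-1/alpha) Gamma(1 - b/alpha) Gamma(1 - (1 - b)/alpha) / (b (1 - b)),
  which by Gamma(x) Gamma(y) <= (1/x + 1/y) Gamma(x + y) is at most (lambda/lambda_c)^2 at b = 1/2;
  by continuity, b slightly above 1/2 costs only a factor 1 + eps.
\<close>

lemma isCont_exists_right_less:
  fixes f :: "real \<Rightarrow> real"
  assumes "isCont f x" "f x < c" "x < y"
  shows "\<exists>z. x < z \<and> z < y \<and> f z < c"
proof -
  have "eventually (\<lambda>z. f z < c) (at_right x)"
    using assms(1,2) by (intro order_tendstoD(2)[OF tendsto_mono[OF at_le]]) (auto simp: isCont_def)
  then obtain d where d: "x < d" "\<And>z. x < z \<Longrightarrow> z < d \<Longrightarrow> f z < c"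
    by (auto simp: eventually_at_right_field)
  show ?thesis
    using d assms(3) by (intro exI[of _ "(x + min d y) / 2"]) auto
qed

text \<open>Log-convexity of Gamma at the points \<open>x \<le> 1 < 2\<close>, where \<open>Gamma 1 = Gamma 2 = 1\<close>.\<close>

lemma Gamma_real_ge_1:
  fixes x :: real assumes "0 < x" "x \<le> 1"
  shows "1 \<le> Gamma x"
proof -
  define t where "t = (1 - x) / (2 - x)"
  have t: "0 \<le> t" "t \<le> 1" using assms by (simp_all add: t_def divide_le_eq_1 zero_le_divide_iff)
  have one: "(1 - t) *\<^sub>R x + t *\<^sub>R 2 = 1"
    using assms by (simp add: t_def divide_simps)
  have "(ln \<circ> Gamma) ((1 - t) *\<^sub>R x + t *\<^sub>R 2) \<le> (1 - t) * (ln \<circ> Gamma) x + t * (ln \<circ> Gamma) 2"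
    by (rule convex_onD[OF log_convex_Gamma_real t]) (use assms in auto)
  then have "(ln \<circ> Gamma) 1 \<le> (1 - t) * (ln \<circ> Gamma) x + t * (ln \<circ> Gamma) 2"
    by (simp only: one)
  moreover have "Gamma (2 :: real) = 1" using Gamma_fact[of 1] by simp
  ultimately have "0 \<le> (1 - t) * ln (Gamma x)" by simp
  moreover have "0 < 1 - t" using assms by (simp add: t_def field_simps)
  ultimately have "0 \<le> ln (Gamma x)" by (simp add: zero_le_mult_iff)
  then show ?thesis using Gamma_real_pos[OF assms(1)] by simp
qed

lemma Beta_real_1_right:
  assumes "0 < x" shows "Beta x 1 = 1 / (x :: real)"
proof -
  have "Gamma (x + 1) = x * Gamma x"
    by (rule Gamma_plus1) (use assms in \<open>auto elim!: nonpos_Ints_cases\<close>)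
  moreover have "Gamma x \<noteq> 0" using Gamma_real_pos[OF assms] by linarith
  ultimately show ?thesis using assms by (simp add: Beta_def)
qed

text \<open>The pointwise bound t^(x-1) (1-t)^(y-1) <= t^(x-1) + (1-t)^(y-1) on [0, 1]
  gives \<open>Beta x y \<le> Beta x 1 + Beta 1 y\<close>.\<close>

lemma Gamma_mult_Gamma_le:
  fixes x y :: real
  assumes x: "0 < x" "x < 1" and y: "0 < y" "y < 1"
  shows "Gamma x * Gamma y \<le> (1 / x + 1 / y) * Gamma (x + y)"
proof -
  have integrand_le: "t powr (x - 1) * (1 - t) powr (y - 1)
      \<le> t powr (x - 1) * (1 - t) powr (1 - 1) + t powr (1 - 1) * (1 - t) powr (y - 1)"
    if t: "t \<in> {0..1}" for t
  proof (cases "t = 0 \<or> t = 1")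
    case False
    then have t: "0 < t" "t < 1" using t by auto
    have "t powr 1 \<le> t powr (1 - x)" "(1 - t) powr 1 \<le> (1 - t) powr (1 - y)"
      using t x y powr_mono'[of "1 - x" 1 t] powr_mono'[of "1 - y" 1 "1 - t"] by auto
    then have "t + (1 - t) \<le> t powr (1 - x) + (1 - t) powr (1 - y)" using t by simp
    then have "t powr (x - 1) * (1 - t) powr (y - 1) * 1
        \<le> t powr (x - 1) * (1 - t) powr (y - 1) * (t powr (1 - x) + (1 - t) powr (1 - y))"
      by (intro mult_left_mono) auto
    also have "\<dots> = (1 - t) powr (y - 1) + t powr (x - 1)"
      using t by (simp add: algebra_simps powr_add[symmetric])
    finally show ?thesis using t by simp
  qed auto
  have "Beta x y \<le> Beta x 1 + Beta 1 y"
    by (rule has_integral_le[OF has_integral_Beta_real has_integral_add[OF has_integral_Beta_real has_integral_Beta_real]])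
       (use x y integrand_le in auto)
  also have "\<dots> = 1 / x + 1 / y"
    using x y by (simp add: Beta_real_1_right Beta_commute[of 1 y])
  finally have "Beta x y \<le> 1 / x + 1 / y" .
  moreover have "Gamma x * Gamma y = Beta x y * Gamma (x + y)"
    by (rule Gamma_Gamma_Beta) (use x y in \<open>auto elim!: nonpos_Ints_cases\<close>)
  ultimately show ?thesis
    using x y by (simp add: mult_right_mono)
qed

lemma nn_integral_exp_neg_interval:
  fixes x :: real assumes "0 \<le> x"
  shows "(\<integral>\<^sup>+t. ennreal (exp (- t)) * indicator {0<..<x} t \<partial>lborel) = ennreal (1 - exp (- x))"
proof -
  have "((\<lambda>t. exp (- t)) has_integral ((- exp (- x)) - (- exp (- 0)))) {0..x}"
    by (rule fundamental_theorem_of_calculus[OF assms])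
       (auto intro!: derivative_eq_intros simp: has_real_derivative_iff_has_vector_derivative[symmetric])
  then have "((\<lambda>t. exp (- t)) has_integral (1 - exp (- x))) {0<..<x}"
    by (subst has_integral_spike_set_eq[where T="{0..x}"]) (auto intro: negligible_subset[of "{0,x}"])
  from nn_integral_has_integral_lebesgue'[OF _ this] show ?thesis by simp
qed

lemma nn_integral_powr_from_0:
  fixes Y c :: real assumes "0 \<le> Y" "c < 1"
  shows "(\<integral>\<^sup>+y. ennreal (y powr (- c)) * indicator {0<..<Y} y \<partial>lborel) = ennreal (Y powr (1 - c) / (1 - c))"
proof -
  have "((\<lambda>y. y powr (- c)) has_integral (Y powr (- c + 1) / (- c + 1))) {0..Y}"
    by (rule has_integral_powr_from_0) (use assms in auto)
  then have "((\<lambda>y. y powr (- c)) has_integral (Y powr (1 - c) / (1 - c))) {0<..<Y}"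
    by (subst has_integral_spike_set_eq[where T="{0..Y}"])
       (auto intro: negligible_subset[of "{0,Y}"] simp: add.commute)
  from nn_integral_has_integral_lebesgue'[OF _ this] show ?thesis by simp
qed

lemma nn_integral_powr_to_inf:
  fixes a e :: real assumes "e < -1" "0 < a"
  shows "(\<integral>\<^sup>+y. ennreal (y powr e) * indicator {a<..} y \<partial>lborel) = ennreal (- (a powr (e + 1)) / (e + 1))"
proof -
  have "((\<lambda>y. y powr e) has_integral (- (a powr (e + 1)) / (e + 1))) {a..}"
    by (rule has_integral_powr_to_inf) (use assms in auto)
  then have "((\<lambda>y. y powr e) has_integral (- (a powr (e + 1)) / (e + 1))) {a<..}"
    by (subst has_integral_spike_set_eq[where T="{a..}"]) (auto intro: negligible_subset[of "{a}"])
  from nn_integral_has_integral_lebesgue'[OF _ this] show ?thesis by simp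
qed

lemma nn_integral_Gamma_real:
  fixes x :: real assumes "0 < x"
  shows "(\<integral>\<^sup>+t. ennreal (t powr (x - 1) * exp (- t)) * indicator {0<..} t \<partial>lborel) = ennreal (Gamma x)"
proof -
  have "((\<lambda>t. t powr (x - 1) * exp (- t)) has_integral Gamma x) {0<..}"
    using Gamma_integral_real[OF assms]
    by (subst has_integral_spike_set_eq[where T="{0..}"])
       (auto intro: negligible_subset[of "{0}"] simp: exp_minus field_simps)
  from nn_integral_has_integral_lebesgue'[OF _ this] show ?thesis by simp
qed

lemma borel_measurable_indicator_upper_bound [measurable]:
  fixes phi :: "real \<Rightarrow> real"
  assumes [measurable]: "phi \<in> borel_measurable borel"
  shows "(\<lambda>y. indicator {0<..<phi y} t :: ennreal) \<in> borel_measurable borel"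
proof -
  have "(\<lambda>y. indicator {0<..<phi y} t :: ennreal) = (\<lambda>y. if 0 < t \<and> t < phi y then 1 else 0)"
    by (auto simp: fun_eq_iff indicator_def)
  also have "\<dots> \<in> borel_measurable borel" by measurable
  finally show ?thesis .
qed

text \<open>Layer-cake formula: \<open>1 - exp (- x) = \<integral>\<^sub>0\<^sup>x exp (- t) dt\<close>, followed by Tonelli.\<close>

lemma nn_integral_mult_one_minus_exp:
  fixes w phi :: "real \<Rightarrow> real"
  assumes [measurable]: "w \<in> borel_measurable borel" "phi \<in> borel_measurable borel"
    and phi_nonneg: "\<And>y. 0 < y \<Longrightarrow> 0 \<le> phi y" and w_nonneg: "\<And>y. 0 < y \<Longrightarrow> 0 \<le> w y"
  shows "(\<integral>\<^sup>+y. ennreal (w y * (1 - exp (- phi y))) * indicator {0<..} y \<partial>lborel)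
       = (\<integral>\<^sup>+t. ennreal (exp (- t)) *
            (\<integral>\<^sup>+y. ennreal (w y) * indicator {0<..} y * indicator {0<..<phi y} t \<partial>lborel) \<partial>lborel)"
proof -
  define f where "f y t = ennreal (exp (- t)) * ennreal (w y) * indicator {0<..} y * indicator {0<..<phi y} t"
    for y t :: real
  have f_measurable: "(\<lambda>(y, t). f y t) \<in> borel_measurable (lborel \<Otimes>\<^sub>M lborel)"
  proof -
    have "(\<lambda>(y, t). f y t) = (\<lambda>z. ennreal (exp (- snd z)) * ennreal (w (fst z)) *
        (if 0 < fst z \<and> 0 < snd z \<and> snd z < phi (fst z) then 1 else 0))"
      by (auto simp: f_def fun_eq_iff indicator_def)
    also have "\<dots> \<in> borel_measurable (lborel \<Otimes>\<^sub>M lborel)" by measurable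
    finally show ?thesis .
  qed
  have "(\<integral>\<^sup>+y. ennreal (w y * (1 - exp (- phi y))) * indicator {0<..} y \<partial>lborel)
      = (\<integral>\<^sup>+y. (\<integral>\<^sup>+t. f y t \<partial>lborel) \<partial>lborel)"
  proof (rule nn_integral_cong)
    fix y :: real
    show "ennreal (w y * (1 - exp (- phi y))) * indicator {0<..} y = (\<integral>\<^sup>+t. f y t \<partial>lborel)"
    proof (cases "0 < y")
      case True
      have "(\<integral>\<^sup>+t. f y t \<partial>lborel)
          = (\<integral>\<^sup>+t. ennreal (exp (- t)) * indicator {0<..<phi y} t \<partial>lborel) * ennreal (w y)"
        by (subst nn_integral_multc[symmetric]) (auto simp: f_def True mult_ac intro!: nn_integral_cong)
      also have "\<dots> = ennreal (1 - exp (- phi y)) * ennreal (w y)"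
        using phi_nonneg[OF True] by (simp add: nn_integral_exp_neg_interval)
      finally show ?thesis
        using True w_nonneg[OF True] phi_nonneg[OF True] by (simp add: ennreal_mult' mult.commute)
    qed (simp add: f_def)
  qed
  also have "\<dots> = (\<integral>\<^sup>+t. (\<integral>\<^sup>+y. f y t \<partial>lborel) \<partial>lborel)"
    by (rule lborel_pair.Fubini'[symmetric, OF f_measurable])
  also have "\<dots> = (\<integral>\<^sup>+t. ennreal (exp (- t)) *
      (\<integral>\<^sup>+y. ennreal (w y) * indicator {0<..} y * indicator {0<..<phi y} t \<partial>lborel) \<partial>lborel)"
    unfolding f_def by (intro nn_integral_cong) (subst nn_integral_cmult[symmetric]; simp add: mult_ac)
  finally show ?thesis .
qed

lemma nn_integral_powr_mult_one_minus_exp: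
  fixes s :: real assumes s: "0 < s" "s < 1"
  shows "(\<integral>\<^sup>+z. ennreal (z powr (- (s + 1)) * (1 - exp (- z))) * indicator {0<..} z \<partial>lborel)
       = ennreal (Gamma (1 - s) / s)"
proof -
  have tail: "(\<integral>\<^sup>+z. ennreal (z powr (- (s + 1))) * indicator {0<..} z * indicator {0<..<z} t \<partial>lborel)
      = ennreal (t powr (- s) / s)" if "0 < t" for t
  proof -
    have "(\<integral>\<^sup>+z. ennreal (z powr (- (s + 1))) * indicator {0<..} z * indicator {0<..<z} t \<partial>lborel)
        = (\<integral>\<^sup>+z. ennreal (z powr (- (s + 1))) * indicator {t<..} z \<partial>lborel)"
      by (rule nn_integral_cong) (use that in \<open>auto simp: indicator_def\<close>)
    also have "\<dots> = ennreal (- (t powr (- (s + 1) + 1)) / (- (s + 1) + 1))"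
      by (rule nn_integral_powr_to_inf) (use that s in auto)
    finally show ?thesis using s by (simp add: field_simps)
  qed
  have "(\<integral>\<^sup>+z. ennreal (z powr (- (s + 1)) * (1 - exp (- z))) * indicator {0<..} z \<partial>lborel)
      = (\<integral>\<^sup>+t. ennreal (exp (- t)) *
          (\<integral>\<^sup>+z. ennreal (z powr (- (s + 1))) * indicator {0<..} z * indicator {0<..<z} t \<partial>lborel) \<partial>lborel)"
    by (rule nn_integral_mult_one_minus_exp) auto
  also have "\<dots> = (\<integral>\<^sup>+t. ennreal (t powr ((1 - s) - 1) * exp (- t)) * indicator {0<..} t * ennreal (1 / s) \<partial>lborel)"
  proof (rule nn_integral_cong)
    fix t :: real
    show "ennreal (exp (- t)) *
        (\<integral>\<^sup>+z. ennreal (z powr (- (s + 1))) * indicator {0<..} z * indicator {0<..<z} t \<partial>lborel)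
      = ennreal (t powr ((1 - s) - 1) * exp (- t)) * indicator {0<..} t * ennreal (1 / s)"
    proof (cases "0 < t")
      case True
      then show ?thesis
        using s by (simp only: tail) (simp add: ennreal_mult'[symmetric] mult_ac divide_inverse)
    qed (simp add: indicator_def)
  qed
  also have "\<dots> = ennreal (Gamma (1 - s)) * ennreal (1 / s)"
    using s nn_integral_Gamma_real[of "1 - s"] by (subst nn_integral_multc) simp_all
  also have "\<dots> = ennreal (Gamma (1 - s) / s)"
    using s by (simp add: ennreal_mult'[symmetric] Gamma_real_pos less_imp_le)
  finally show ?thesis .
qed

definition nr_kernel :: "real \<Rightarrow> real \<Rightarrow> real \<Rightarrow> real" where
  "nr_kernel ka al u = 1 - exp (- (ka * u powr (- al)))"

text \<open>The integral of \<open>y powr (- c) * nr_kernel ka al y\<close> over \<open>{0<..}\<close>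
  (lemma \<open>nn_integral_powr_mult_nr_kernel\<close>).\<close>

definition nr_kernel_moment :: "real \<Rightarrow> real \<Rightarrow> real \<Rightarrow> real" where
  "nr_kernel_moment ka al c = ka powr ((1 - c) / al) * Gamma (1 - (1 - c) / al) / (1 - c)"

lemma nr_kernel_nonneg: "0 \<le> ka \<Longrightarrow> 0 \<le> nr_kernel ka al u"
  unfolding nr_kernel_def by simp

lemma nr_kernel_antimono:
  assumes "0 \<le> ka" "0 < al" "0 < x" "x \<le> y"
  shows "nr_kernel ka al y \<le> nr_kernel ka al x"
proof -
  have "y powr (- al) \<le> x powr (- al)"
    using assms by (intro powr_mono2') auto
  then show ?thesis
    using assms unfolding nr_kernel_def by (simp add: mult_left_mono)
qed

text \<open>Interpolates between the bounds \<open>1 - exp (- x) \<le> 1\<close> and \<open>1 - exp (- x) \<le> x\<close>.\<close>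

lemma nr_kernel_le_powr:
  assumes ka: "0 < ka" and al: "0 < al" and b: "0 \<le> b" "b \<le> al" and u: "0 < u"
  shows "nr_kernel ka al u \<le> ka powr (b / al) * u powr (- b)"
proof -
  define x where "x = ka * u powr (- al)"
  have x: "0 < x" using ka u by (simp add: x_def)
  have th: "0 \<le> b / al" "b / al \<le> 1" using b al by auto
  have "1 - exp (- x) \<le> x powr (b / al)"
  proof (cases "1 \<le> x")
    case True
    have "1 - exp (- x) \<le> 1" by simp
    then show ?thesis using True th ge_one_powr_ge_zero[of x "b / al"] by linarith
  next
    case False
    have "1 - exp (- x) \<le> x" using exp_ge_add_one_self[of "- x"] by simp
    also have "\<dots> \<le> x powr (b / al)" using False x th powr_mono'[of "b / al" 1 x] by simp
    finally show ?thesis .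
  qed
  also have "x powr (b / al) = ka powr (b / al) * u powr (- b)"
    using ka u al by (simp add: x_def powr_mult powr_powr)
  finally show ?thesis by (simp add: nr_kernel_def x_def)
qed

lemma nr_kernel_moment_nonneg:
  assumes "0 < al" "c < 1" "1 - c < al"
  shows "0 \<le> nr_kernel_moment ka al c"
  using assms by (auto simp: nr_kernel_moment_def field_simps intro!: divide_nonneg_pos Gamma_real_nonneg)

lemma nr_kernel_moment_mult:
  "nr_kernel_moment ka al c * nr_kernel_moment ka al (1 - c)
    = ka powr (1 / al) * (Gamma (1 - c / al) * Gamma (1 - (1 - c) / al)) / (c * (1 - c))"
proof -
  have "ka powr ((1 - c) / al) * ka powr (c / al) = ka powr (1 / al)"
    by (simp add: powr_add[symmetric] add_divide_distrib[symmetric])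
  then show ?thesis by (simp add: nr_kernel_moment_def field_simps)
qed

lemma powr_le_nr_kernel_moment:
  assumes ka: "0 < ka" and b: "0 < b" "b \<le> 1" "b < al"
  shows "ka powr (b / al) \<le> nr_kernel_moment ka al (1 - b)"
proof -
  have "1 \<le> Gamma (1 - b / al)" using b by (intro Gamma_real_ge_1) auto
  then have "b \<le> Gamma (1 - b / al)" using b by linarith
  then have "ka powr (b / al) * b \<le> ka powr (b / al) * Gamma (1 - b / al)"
    by (intro mult_left_mono) auto
  then show ?thesis using b by (simp add: nr_kernel_moment_def field_simps)
qed

lemma less_mult_powr_neg_iff:
  fixes t ka al y :: real
  assumes "0 < y" "0 < t" "0 < ka" "0 < al"
  shows "t < ka * y powr (- al) \<longleftrightarrow> y < (ka / t) powr (1 / al)"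
proof -
  have "t < ka * y powr (- al) \<longleftrightarrow> y powr al < ka / t"
    using assms by (auto simp: powr_minus field_simps)
  also have "\<dots> \<longleftrightarrow> (y powr al) powr (1 / al) < (ka / t) powr (1 / al)"
  proof
    show "y powr al < ka / t \<Longrightarrow> (y powr al) powr (1 / al) < (ka / t) powr (1 / al)"
      using assms by (intro powr_less_mono2) auto
    assume less: "(y powr al) powr (1 / al) < (ka / t) powr (1 / al)"
    show "y powr al < ka / t"
    proof (rule ccontr)
      assume "\<not> y powr al < ka / t"
      then have "(ka / t) powr (1 / al) \<le> (y powr al) powr (1 / al)"
        using assms by (intro powr_mono2) auto
      with less show False by simp
    qed
  qed
  finally show ?thesis using assms by (simp add: powr_powr)
qed

lemma nn_integral_powr_mult_nr_kernel:
  fixes ka al c :: real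
  assumes ka: "0 < ka" and al: "0 < al" and c: "c < 1" "1 - c < al"
  shows "(\<integral>\<^sup>+y. ennreal (y powr (- c) * nr_kernel ka al y) * indicator {0<..} y \<partial>lborel)
       = ennreal (nr_kernel_moment ka al c)"
proof -
  define s where "s = (1 - c) / al"
  have s: "0 < s" "s < 1" using c al by (auto simp: s_def field_simps)
  have inner: "(\<integral>\<^sup>+y. ennreal (y powr (- c)) * indicator {0<..} y * indicator {0<..<ka * y powr (- al)} t \<partial>lborel)
      = ennreal (ka powr s * t powr (- s) / (1 - c))" if t: "0 < t" for t
  proof -
    have "(\<integral>\<^sup>+y. ennreal (y powr (- c)) * indicator {0<..} y * indicator {0<..<ka * y powr (- al)} t \<partial>lborel)
        = (\<integral>\<^sup>+y. ennreal (y powr (- c)) * indicator {0<..<(ka / t) powr (1 / al)} y \<partial>lborel)"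
      by (rule nn_integral_cong) (use t ka al in \<open>auto simp: indicator_def less_mult_powr_neg_iff\<close>)
    also have "\<dots> = ennreal (((ka / t) powr (1 / al)) powr (1 - c) / (1 - c))"
      by (rule nn_integral_powr_from_0) (use c in auto)
    also have "((ka / t) powr (1 / al)) powr (1 - c) = ka powr s * t powr (- s)"
      using t ka by (simp add: powr_powr s_def powr_divide powr_minus_divide)
    finally show ?thesis .
  qed
  have "(\<integral>\<^sup>+y. ennreal (y powr (- c) * nr_kernel ka al y) * indicator {0<..} y \<partial>lborel)
      = (\<integral>\<^sup>+t. ennreal (exp (- t)) *
          (\<integral>\<^sup>+y. ennreal (y powr (- c)) * indicator {0<..} y * indicator {0<..<ka * y powr (- al)} t \<partial>lborel) \<partial>lborel)"
    unfolding nr_kernel_def by (rule nn_integral_mult_one_minus_exp) (use ka in auto)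
  also have "\<dots> = (\<integral>\<^sup>+t. ennreal (t powr ((1 - s) - 1) * exp (- t)) * indicator {0<..} t *
      ennreal (ka powr s / (1 - c)) \<partial>lborel)"
  proof (rule nn_integral_cong)
    fix t :: real
    show "ennreal (exp (- t)) *
        (\<integral>\<^sup>+y. ennreal (y powr (- c)) * indicator {0<..} y * indicator {0<..<ka * y powr (- al)} t \<partial>lborel)
      = ennreal (t powr ((1 - s) - 1) * exp (- t)) * indicator {0<..} t * ennreal (ka powr s / (1 - c))"
    proof (cases "0 < t")
      case True
      then show ?thesis
        using s c by (simp only: inner)
          (simp add: ennreal_mult'[symmetric] mult_ac powr_minus divide_inverse)
    qed (simp add: indicator_def)
  qed
  also have "\<dots> = ennreal (Gamma (1 - s)) * ennreal (ka powr s / (1 - c))"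
    using s nn_integral_Gamma_real[of "1 - s"] by (subst nn_integral_multc) simp_all
  also have "\<dots> = ennreal (nr_kernel_moment ka al c)"
    using s c ka by (simp add: ennreal_mult'[symmetric] Gamma_real_pos less_imp_le nr_kernel_moment_def s_def)
  finally show ?thesis .
qed

lemma sum_indicator_unit_intervals_le:
  fixes y :: real
  shows "(\<Sum>m\<in>{1..n}. (indicator {real m - 1<..real m} y :: ennreal)) \<le> indicator {0<..} y"
proof (cases "0 < y")
  case True
  have "(\<Sum>m\<in>{1..n}. (indicator {real m - 1<..real m} y :: ennreal))
      = (\<Sum>m\<in>{1..n}. if m = nat \<lceil>y\<rceil> then indicator {real m - 1<..real m} y else 0)"
    by (intro sum.cong refl) (auto simp: indicator_def, linarith)
  also have "\<dots> \<le> 1"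
    by (subst sum.delta) (auto simp: indicator_def)
  finally show ?thesis using True by (simp add: indicator_def)
qed (auto simp: indicator_def intro!: sum.neutral)

lemma sum_le_nn_integral_antimono:
  fixes F :: "real \<Rightarrow> real"
  assumes [measurable]: "F \<in> borel_measurable borel"
    and nonneg: "\<And>x. 0 < x \<Longrightarrow> 0 \<le> F x"
    and antimono: "\<And>x y. 0 < x \<Longrightarrow> x \<le> y \<Longrightarrow> F y \<le> F x"
  shows "ennreal (\<Sum>m\<in>{1..n}. F (real m)) \<le> (\<integral>\<^sup>+y. ennreal (F y) * indicator {0<..} y \<partial>lborel)"
proof -
  have "ennreal (\<Sum>m\<in>{1..n}. F (real m))
      = (\<Sum>m\<in>{1..n}. \<integral>\<^sup>+y. ennreal (F (real m)) * indicator {real m - 1<..real m} y \<partial>lborel)"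
    by (subst sum_ennreal[symmetric]) (auto intro: nonneg simp: nn_integral_cmult_indicator)
  also have "\<dots> \<le> (\<Sum>m\<in>{1..n}. \<integral>\<^sup>+y. ennreal (F y) * indicator {real m - 1<..real m} y \<partial>lborel)"
    by (intro sum_mono nn_integral_mono)
       (auto simp: indicator_def intro!: ennreal_leI antimono)
  also have "\<dots> = (\<integral>\<^sup>+y. ennreal (F y) * (\<Sum>m\<in>{1..n}. indicator {real m - 1<..real m} y) \<partial>lborel)"
    by (subst nn_integral_sum[symmetric]) (simp_all add: sum_distrib_left)
  also have "\<dots> \<le> (\<integral>\<^sup>+y. ennreal (F y) * indicator {0<..} y \<partial>lborel)"
    by (intro nn_integral_mono mult_left_mono sum_indicator_unit_intervals_le) auto
  finally show ?thesis .
qed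

lemma sum_powr_mult_nr_kernel_le:
  fixes ka al c l :: real
  assumes ka: "0 < ka" and al: "0 < al" and c: "0 \<le> c" "c < 1" "1 - c < al" and l: "0 < l"
  shows "(\<Sum>m\<in>{1..n}. real m powr (- c) * nr_kernel ka al (l * real m))
    \<le> l powr (c - 1) * nr_kernel_moment ka al c"
proof -
  define L where "L = ka * l powr (- al)"
  have L: "0 < L" using ka l by (simp add: L_def)
  define F where "F y = y powr (- c) * nr_kernel L al y" for y
  have F_eq: "F y = y powr (- c) * nr_kernel ka al (l * y)" if "0 < y" for y
    using that l by (simp add: F_def nr_kernel_def L_def powr_mult mult_ac)
  have "ennreal (\<Sum>m\<in>{1..n}. F (real m)) \<le> (\<integral>\<^sup>+y. ennreal (F y) * indicator {0<..} y \<partial>lborel)"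
  proof (rule sum_le_nn_integral_antimono)
    show "F \<in> borel_measurable borel" unfolding F_def nr_kernel_def by measurable
    show "\<And>x. 0 < x \<Longrightarrow> 0 \<le> F x" unfolding F_def using L by (simp add: nr_kernel_nonneg)
    show "F y \<le> F x" if "0 < x" "x \<le> y" for x y
      unfolding F_def using that L al c
      by (intro mult_mono powr_mono2' nr_kernel_antimono nr_kernel_nonneg) auto
  qed
  also have "\<dots> = ennreal (nr_kernel_moment L al c)"
    unfolding F_def by (rule nn_integral_powr_mult_nr_kernel) (use L al c in auto)
  finally have "(\<Sum>m\<in>{1..n}. F (real m)) \<le> nr_kernel_moment L al c"
    using nr_kernel_moment_nonneg[of al c L] al c by (simp add: ennreal_le_iff)
  also have "nr_kernel_moment L al c = l powr (c - 1) * nr_kernel_moment ka al c"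
  proof -
    have "L powr ((1 - c) / al) = l powr (c - 1) * ka powr ((1 - c) / al)"
      using ka l al by (simp add: L_def powr_mult powr_powr mult.commute)
    then show ?thesis by (simp add: nr_kernel_moment_def)
  qed
  finally show ?thesis by (simp add: F_eq)
qed

fun walk_weight :: "(nat \<Rightarrow> nat \<Rightarrow> real) \<Rightarrow> nat list \<Rightarrow> real" where
  "walk_weight p (a # b # r) = p a b * walk_weight p (b # r)"
| "walk_weight p _ = 1"

definition vertex_lists :: "nat \<Rightarrow> nat \<Rightarrow> nat list set" where
  "vertex_lists n m = {xs. length xs = m \<and> set xs \<subseteq> {1..n}}"

text \<open>The \<open>(i, j)\<close> entry of the \<open>m\<close>-th power of the \<open>n \<times> n\<close> matrix \<open>(p a c)\<close>,
  written as a sum over the walks \<open>i # xs\<close>.\<close>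

definition walk_sum :: "nat \<Rightarrow> (nat \<Rightarrow> nat \<Rightarrow> real) \<Rightarrow> nat \<Rightarrow> nat \<Rightarrow> nat \<Rightarrow> real" where
  "walk_sum n p m i j = (\<Sum>xs\<in>vertex_lists n m. if last (i # xs) = j then walk_weight p (i # xs) else 0)"

lemma walk_weight_nonneg: "(\<And>a b. 0 \<le> p a b) \<Longrightarrow> 0 \<le> walk_weight p xs"
  by (induction p xs rule: walk_weight.induct) auto

lemma finite_vertex_lists: "finite (vertex_lists n m)"
  using finite_lists_length_eq[of "{1..n}" m] unfolding vertex_lists_def by (simp add: conj_commute)

lemma vertex_lists_0: "vertex_lists n 0 = {[]}"
  by (auto simp: vertex_lists_def)

lemma vertex_lists_Suc: "vertex_lists n (Suc m) = (\<lambda>(l, ys). l # ys) ` ({1..n} \<times> vertex_lists n m)"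
proof
  show "vertex_lists n (Suc m) \<subseteq> (\<lambda>(l, ys). l # ys) ` ({1..n} \<times> vertex_lists n m)"
  proof
    fix xs assume "xs \<in> vertex_lists n (Suc m)"
    then obtain l ys where "xs = l # ys" "length ys = m" "set (l # ys) \<subseteq> {1..n}"
      unfolding vertex_lists_def by (cases xs) auto
    then show "xs \<in> (\<lambda>(l, ys). l # ys) ` ({1..n} \<times> vertex_lists n m)"
      unfolding vertex_lists_def by (auto intro!: image_eqI[of _ _ "(l, ys)"])
  qed
qed (auto simp: vertex_lists_def)

lemma walk_sum_0: "walk_sum n p 0 i j = (if i = j then 1 else 0)"
  by (simp add: walk_sum_def vertex_lists_0)

lemma walk_sum_Suc: "walk_sum n p (Suc m) i j = (\<Sum>l\<in>{1..n}. p i l * walk_sum n p m l j)"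
proof -
  have inj: "inj_on (\<lambda>(l, ys). l # ys) ({1..n} \<times> vertex_lists n m)"
    by (auto simp: inj_on_def)
  have "walk_sum n p (Suc m) i j = (\<Sum>(l, ys)\<in>{1..n} \<times> vertex_lists n m.
      if last (i # l # ys) = j then walk_weight p (i # l # ys) else 0)"
    unfolding walk_sum_def vertex_lists_Suc by (subst sum.reindex[OF inj]) (simp add: case_prod_unfold)
  also have "\<dots> = (\<Sum>l\<in>{1..n}. \<Sum>ys\<in>vertex_lists n m.
      p i l * (if last (l # ys) = j then walk_weight p (l # ys) else 0))"
    by (subst sum.cartesian_product[symmetric]) (auto intro!: sum.cong)
  also have "\<dots> = (\<Sum>l\<in>{1..n}. p i l * walk_sum n p m l j)"
    by (simp add: walk_sum_def sum_distrib_left)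
  finally show ?thesis .
qed

lemma walk_sum_nonneg:
  assumes "\<And>a c. a \<in> {1..n} \<Longrightarrow> c \<in> {1..n} \<Longrightarrow> 0 \<le> p a c" and "i \<in> {1..n}"
  shows "0 \<le> walk_sum n p m i j"
  using assms(2) by (induction m arbitrary: i) (auto simp: walk_sum_0 walk_sum_Suc intro!: sum_nonneg mult_nonneg_nonneg assms(1))

lemma walk_sum_add:
  assumes "i \<in> {1..n}"
  shows "walk_sum n p (a + b) i j = (\<Sum>l\<in>{1..n}. walk_sum n p a i l * walk_sum n p b l j)"
  using assms
proof (induction a arbitrary: i)
  case 0
  have "(\<Sum>l\<in>{1..n}. (if i = l then 1 else 0) * walk_sum n p b l j) = walk_sum n p b i j"
    using 0 by (simp add: if_distrib[of "\<lambda>x. x * _"] sum.delta cong: if_cong)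
  then show ?case by (simp add: walk_sum_0)
next
  case (Suc a)
  have "walk_sum n p (Suc a + b) i j = (\<Sum>l\<in>{1..n}. p i l * (\<Sum>l'\<in>{1..n}. walk_sum n p a l l' * walk_sum n p b l' j))"
    by (simp add: walk_sum_Suc Suc.IH)
  also have "\<dots> = (\<Sum>l'\<in>{1..n}. walk_sum n p (Suc a) i l' * walk_sum n p b l' j)"
    by (simp add: walk_sum_Suc sum_distrib_left sum_distrib_right mult_ac) (rule sum.swap)
  finally show ?case .
qed

lemma walk_sum_2: "j \<in> {1..n} \<Longrightarrow> walk_sum n p 2 i j = (\<Sum>l\<in>{1..n}. p i l * p l j)"
  by (simp add: numeral_2_eq_2 walk_sum_Suc walk_sum_0 if_distrib cong: if_cong)

locale nr_dominated_kernel =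
  fixes n :: nat and p :: "nat \<Rightarrow> nat \<Rightarrow> real" and pr ka al :: real
  assumes kernel_bounds:
    "\<And>a c. a \<in> {1..n} \<Longrightarrow> c \<in> {1..n} \<Longrightarrow> 0 \<le> p a c \<and> p a c \<le> pr * nr_kernel ka al (real a * real c)"
    and pr_nonneg: "0 \<le> pr" and ka_pos: "0 < ka" and al_pos: "0 < al"
begin

lemma sum_nr_kernel_powr_le:
  assumes c: "0 \<le> c" "c < 1" "1 - c < al" and l: "l \<in> {1..n}"
  shows "(\<Sum>m\<in>{1..n}. pr * nr_kernel ka al (real l * real m) * real m powr (- c))
    \<le> pr * (real l powr (c - 1) * nr_kernel_moment ka al c)"
proof -
  have "(\<Sum>m\<in>{1..n}. real m powr (- c) * nr_kernel ka al (real l * real m))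
      \<le> real l powr (c - 1) * nr_kernel_moment ka al c"
    using sum_powr_mult_nr_kernel_le[OF ka_pos al_pos c, of "real l" n] l by simp
  from mult_left_mono[OF this pr_nonneg] show ?thesis
    by (simp add: sum_distrib_left mult_ac)
qed

lemma walk_sum_2_moment_le:
  assumes c: "0 < c" "c < 1" "1 - c < al" "c < al" and i: "i \<in> {1..n}"
  shows "(\<Sum>m\<in>{1..n}. walk_sum n p 2 i m * real m powr (- c))
    \<le> pr\<^sup>2 * nr_kernel_moment ka al c * nr_kernel_moment ka al (1 - c) * real i powr (- c)"
proof -
  have row: "(\<Sum>m\<in>{1..n}. p l m * real m powr (- c)) \<le> pr * (real l powr (c - 1) * nr_kernel_moment ka al c)"
    if l: "l \<in> {1..n}" for l
    using l c kernel_bounds[OF l]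
    by (intro order_trans[OF sum_mono sum_nr_kernel_powr_le]) (auto intro: mult_right_mono)
  have "(\<Sum>m\<in>{1..n}. walk_sum n p 2 i m * real m powr (- c))
      = (\<Sum>l\<in>{1..n}. p i l * (\<Sum>m\<in>{1..n}. p l m * real m powr (- c)))"
    by (simp add: walk_sum_2 sum_distrib_left sum_distrib_right mult_ac) (rule sum.swap)
  also have "\<dots> \<le> (\<Sum>l\<in>{1..n}. p i l * (pr * (real l powr (c - 1) * nr_kernel_moment ka al c)))"
    using kernel_bounds i row by (intro sum_mono mult_left_mono) auto
  also have "\<dots> = pr * nr_kernel_moment ka al c * (\<Sum>l\<in>{1..n}. p i l * real l powr (- (1 - c)))"
    by (simp add: sum_distrib_left mult_ac)
  also have "\<dots> \<le> pr * nr_kernel_moment ka al c *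
      (\<Sum>l\<in>{1..n}. pr * nr_kernel ka al (real i * real l) * real l powr (- (1 - c)))"
    using kernel_bounds i c pr_nonneg nr_kernel_moment_nonneg[OF al_pos]
    by (intro mult_left_mono sum_mono mult_right_mono) auto
  also have "\<dots> \<le> pr * nr_kernel_moment ka al c * (pr * (real i powr ((1 - c) - 1) * nr_kernel_moment ka al (1 - c)))"
    using i c pr_nonneg nr_kernel_moment_nonneg[OF al_pos]
    by (intro mult_left_mono sum_nr_kernel_powr_le) auto
  finally show ?thesis by (simp add: power2_eq_square mult_ac)
qed

lemma walk_sum_2_le:
  assumes c: "0 < c" "c < 1" "1 - c < al" "c < al" and i: "i \<in> {1..n}" and j: "j \<in> {1..n}"
  shows "walk_sum n p 2 i j
    \<le> pr\<^sup>2 * nr_kernel_moment ka al c * nr_kernel_moment ka al (1 - c) * (real i powr (- c) * real j powr (c - 1))"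
proof -
  have p_powr: "p a l \<le> pr * (ka powr (c / al) * (real a powr (- c) * real l powr (- c)))"
    if "a \<in> {1..n}" "l \<in> {1..n}" for a l
    using kernel_bounds[OF that] nr_kernel_le_powr[OF ka_pos al_pos _ less_imp_le[OF c(4)], of "real a * real l"]
      that c pr_nonneg
    by (auto simp: powr_mult intro: order_trans mult_left_mono)
  have "walk_sum n p 2 i j \<le> (\<Sum>l\<in>{1..n}. pr * (ka powr (c / al) * (real i powr (- c) * real l powr (- c))) *
      (pr * nr_kernel ka al (real j * real l)))"
    unfolding walk_sum_2[OF j]
    using kernel_bounds i j p_powr pr_nonneg
    by (intro sum_mono mult_mono) (auto simp: mult.commute[of "real j"])
  also have "\<dots> = pr * ka powr (c / al) * real i powr (- c) *
      (\<Sum>l\<in>{1..n}. pr * nr_kernel ka al (real j * real l) * real l powr (- c))"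
    by (simp add: sum_distrib_left mult_ac)
  also have "\<dots> \<le> pr * ka powr (c / al) * real i powr (- c) * (pr * (real j powr (c - 1) * nr_kernel_moment ka al c))"
    using j c pr_nonneg by (intro mult_left_mono sum_nr_kernel_powr_le) auto
  also have "\<dots> = pr\<^sup>2 * ka powr (c / al) * nr_kernel_moment ka al c * (real i powr (- c) * real j powr (c - 1))"
    by (simp add: power2_eq_square mult_ac)
  also have "\<dots> \<le> pr\<^sup>2 * nr_kernel_moment ka al (1 - c) * nr_kernel_moment ka al c *
      (real i powr (- c) * real j powr (c - 1))"
    using c ka_pos nr_kernel_moment_nonneg[OF al_pos, of c ka]
    by (intro mult_right_mono mult_left_mono powr_le_nr_kernel_moment) auto
  finally show ?thesis by (simp add: mult_ac)
qed

lemma walk_sum_even_le: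
  assumes c: "0 < c" "c < 1" "1 - c < al" "c < al" and i: "i \<in> {1..n}" and j: "j \<in> {1..n}"
  shows "walk_sum n p (2 * Suc k) i j
    \<le> (pr\<^sup>2 * nr_kernel_moment ka al c * nr_kernel_moment ka al (1 - c)) ^ Suc k * (real i powr (- c) * real j powr (c - 1))"
  using i
proof (induction k arbitrary: i)
  case 0
  then show ?case using walk_sum_2_le[OF c _ j] by simp
next
  case (Suc k)
  define M where "M = pr\<^sup>2 * nr_kernel_moment ka al c * nr_kernel_moment ka al (1 - c)"
  have M: "0 \<le> M ^ Suc k" using c pr_nonneg nr_kernel_moment_nonneg[OF al_pos] by (simp add: M_def)
  have "walk_sum n p (2 * Suc (Suc k)) i j = (\<Sum>m\<in>{1..n}. walk_sum n p 2 i m * walk_sum n p (2 * Suc k) m j)"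
    using walk_sum_add[OF Suc.prems, of p 2 "2 * Suc k" j] by simp
  also have "\<dots> \<le> (\<Sum>m\<in>{1..n}. walk_sum n p 2 i m * (M ^ Suc k * (real m powr (- c) * real j powr (c - 1))))"
    using Suc kernel_bounds by (intro sum_mono mult_left_mono walk_sum_nonneg) (auto simp: M_def)
  also have "\<dots> = M ^ Suc k * real j powr (c - 1) * (\<Sum>m\<in>{1..n}. walk_sum n p 2 i m * real m powr (- c))"
    by (simp add: sum_distrib_left mult_ac)
  also have "\<dots> \<le> M ^ Suc k * real j powr (c - 1) * (M * real i powr (- c))"
    using walk_sum_2_moment_le[OF c Suc.prems] M by (intro mult_left_mono) (auto simp: M_def)
  finally show ?case by (simp add: M_def mult_ac)
qed

lemma walk_sum_even_le_min_max:
  assumes b: "0 < b" "b < 1" "1 - b < al" "b < al" and k: "1 \<le> k"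
    and i: "i \<in> {1..n}" and j: "j \<in> {1..n}"
  shows "walk_sum n p (2 * k) i j
    \<le> (pr\<^sup>2 * nr_kernel_moment ka al b * nr_kernel_moment ka al (1 - b)) ^ k
        / (real (min i j) powr (1 - b) * real (max i j) powr b)"
proof -
  obtain k' where k': "k = Suc k'" using k by (cases k) auto
  have inv: "real x powr (b - 1) = inverse (real x powr (1 - b))" for x
    by (simp add: powr_minus[symmetric])
  show ?thesis
  proof (cases "i \<le> j")
    case True
    have c: "0 < 1 - b" "1 - (1 - b) < al" using b by auto
    from walk_sum_even_le[OF c(1) _ c(2) b(3) i j, of k'] True b show ?thesis
      by (simp add: k' min_def max_def inv powr_minus divide_inverse mult_ac)
  next
    case False
    from walk_sum_even_le[OF b i j, of k'] False show ?thesis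
      by (simp add: k' min_def max_def inv powr_minus divide_inverse mult_ac)
  qed
qed

end

fun walk_edges :: "nat list \<Rightarrow> (nat \<times> nat) set" where
  "walk_edges (a # b # r) = insert (min a b, max a b) (walk_edges (b # r))"
| "walk_edges _ = {}"

lemma walk_edges_in_set: "(x, y) \<in> walk_edges xs \<Longrightarrow> x \<in> set xs \<and> y \<in> set xs"
  by (induction xs rule: walk_edges.induct) (auto simp: min_def max_def split: if_splits)

lemma finite_walk_edges: "finite (walk_edges xs)"
  by (induction xs rule: walk_edges.induct) auto

lemma prod_walk_edges:
  "distinct xs \<Longrightarrow> (\<Prod>e\<in>walk_edges xs. q e) = walk_weight (\<lambda>a b. q (min a b, max a b)) xs"
proof (induction xs rule: walk_edges.induct)
  case (1 a b r)
  have "(min a b, max a b) \<notin> walk_edges (b # r)"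
  proof
    assume "(min a b, max a b) \<in> walk_edges (b # r)"
    from walk_edges_in_set[OF this] have "a \<in> set (b # r)" by (auto simp: min_def max_def split: if_splits)
    with "1.prems" show False by simp
  qed
  then show ?case using "1" by (simp add: finite_walk_edges)
qed auto

lemma walk_edges_subset_pairs:
  "distinct xs \<Longrightarrow> set xs \<subseteq> {1..n} \<Longrightarrow> walk_edges xs \<subseteq> pairs n"
  by (induction xs rule: walk_edges.induct) (auto simp: pairs_def min_def max_def)

lemma walk_edges_map_upt:
  assumes "\<And>t. s \<le> t \<Longrightarrow> t < s + m \<Longrightarrow> (min (v t) (v (Suc t)), max (v t) (v (Suc t))) \<in> E"
  shows "walk_edges (map v [s..<Suc (s + m)]) \<subseteq> E"
  using assms
proof (induction m arbitrary: s)
  case (Suc m)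
  have "walk_edges (map v [Suc s..<Suc (Suc s + m)]) \<subseteq> E"
    by (rule Suc.IH) (use Suc.prems in auto)
  moreover have "(min (v s) (v (Suc s)), max (v s) (v (Suc s))) \<in> E" using Suc.prems by auto
  ultimately show ?case
    by (simp del: upt_Suc add: upt_conv_Cons)
qed simp

lemma finite_pairs: "finite (pairs n)"
  by (rule finite_subset[of _ "{1..n} \<times> {1..n}"]) (auto simp: pairs_def)

lemma graph_prob_superset:
  assumes S: "S \<subseteq> pairs n"
  shows "graph_prob q n (\<lambda>E. S \<subseteq> E) = (\<Prod>e\<in>S. q e)"
proof -
  let ?U = "pairs n"
  have fU: "finite ?U" by (rule finite_pairs)
  have fS: "finite S" using S fU by (rule finite_subset)
  have "graph_prob q n (\<lambda>E. S \<subseteq> E) = (\<Sum>E\<in>{E\<in>Pow ?U. S \<subseteq> E}. (\<Prod>e\<in>E. q e) * (\<Prod>e\<in>?U - E. 1 - q e))"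
    unfolding graph_prob_def by (subst sum.inter_filter[symmetric]) (auto simp: fU)
  also have "{E\<in>Pow ?U. S \<subseteq> E} = (\<lambda>F. S \<union> F) ` Pow (?U - S)"
    using S by (auto intro!: image_eqI[of _ _ "_ - S"])
  also have "(\<Sum>E\<in>(\<lambda>F. S \<union> F) ` Pow (?U - S). (\<Prod>e\<in>E. q e) * (\<Prod>e\<in>?U - E. 1 - q e))
      = (\<Sum>F\<in>Pow (?U - S). (\<Prod>e\<in>S. q e) * ((\<Prod>e\<in>F. q e) * (\<Prod>e\<in>(?U - S) - F. 1 - q e)))"
  proof (subst sum.reindex, force simp: inj_on_def, intro sum.cong refl)
    fix F assume F: "F \<in> Pow (?U - S)"
    then have "finite F" using fU by (auto intro: finite_subset)
    then have "(\<Prod>e\<in>S \<union> F. q e) = (\<Prod>e\<in>S. q e) * (\<Prod>e\<in>F. q e)"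
      using F fS by (subst prod.union_disjoint) auto
    moreover have "?U - (S \<union> F) = (?U - S) - F" by auto
    ultimately show "((\<lambda>E. (\<Prod>e\<in>E. q e) * (\<Prod>e\<in>?U - E. 1 - q e)) \<circ> (\<union>) S) F
        = (\<Prod>e\<in>S. q e) * ((\<Prod>e\<in>F. q e) * (\<Prod>e\<in>(?U - S) - F. 1 - q e))" by simp
  qed
  also have "\<dots> = (\<Prod>e\<in>S. q e) * (\<Prod>e\<in>?U - S. q e + (1 - q e))"
    by (subst prod_add) (auto simp: fU sum_distrib_left)
  finally show ?thesis by simp
qed

lemma graph_prob_union_le:
  assumes q: "\<And>e. 0 \<le> q e \<and> q e \<le> 1" and X: "finite X"
    and cover: "\<And>E. E \<subseteq> pairs n \<Longrightarrow> Q E \<Longrightarrow> \<exists>x\<in>X. R x E"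
  shows "graph_prob q n Q \<le> (\<Sum>x\<in>X. graph_prob q n (R x))"
proof -
  let ?w = "\<lambda>E. (\<Prod>e\<in>E. q e) * (\<Prod>e\<in>pairs n - E. 1 - q e)"
  have w_nonneg: "0 \<le> ?w E" for E
    using q by (intro mult_nonneg_nonneg prod_nonneg) auto
  have "graph_prob q n Q \<le> (\<Sum>E\<in>Pow (pairs n). \<Sum>x\<in>X. if R x E then ?w E else 0)"
    unfolding graph_prob_def
  proof (rule sum_mono)
    fix E assume E: "E \<in> Pow (pairs n)"
    show "(if Q E then ?w E else 0) \<le> (\<Sum>x\<in>X. if R x E then ?w E else 0)"
    proof (cases "Q E")
      case True
      then obtain x where x: "x \<in> X" "R x E" using cover E by auto
      have "?w E = (if R x E then ?w E else 0)" using x by simp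
      also have "\<dots> \<le> (\<Sum>x\<in>X. if R x E then ?w E else 0)"
        by (rule member_le_sum) (use x X w_nonneg in auto)
      finally show ?thesis using True by simp
    qed (auto intro!: sum_nonneg w_nonneg)
  qed
  also have "\<dots> = (\<Sum>x\<in>X. graph_prob q n (R x))"
    unfolding graph_prob_def by (rule sum.swap)
  finally show ?thesis .
qed

lemma has_path_imp_vertex_list:
  assumes E: "E \<subseteq> pairs n" and path: "has_path E m i j" and m: "1 \<le> m"
  shows "\<exists>xs\<in>vertex_lists n m. distinct (i # xs) \<and> last (i # xs) = j \<and> walk_edges (i # xs) \<subseteq> E"
proof -
  obtain v where v0: "v 0 = i" and vm: "v m = j" and inj: "inj_on v {0..m}"
    and adjacent: "\<forall>t<m. adj E (v t) (v (Suc t))"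
    using path unfolding has_path_def by blast
  define xs where "xs = map v [1..<Suc m]"
  have ixs: "i # xs = map v [0..<Suc m]"
    unfolding xs_def using v0 by (simp del: upt_Suc add: upt_conv_Cons)
  have edge: "(min (v t) (v (Suc t)), max (v t) (v (Suc t))) \<in> E" if "t < m" for t
    using adjacent that unfolding adj_def by auto
  have "set xs \<subseteq> {1..n}"
  proof
    fix x assume "x \<in> set xs"
    then obtain t where t: "t < m" "x = v (Suc t)" unfolding xs_def
      by (auto simp del: upt_Suc) (metis Suc_le_D Suc_le_lessD less_Suc_eq_le)
    have "(min (v t) (v (Suc t)), max (v t) (v (Suc t))) \<in> pairs n" using edge[OF t(1)] E by auto
    then show "x \<in> {1..n}" using t by (auto simp: pairs_def min_def max_def split: if_splits)
  qed
  moreover have "distinct (i # xs)"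
    unfolding ixs distinct_map using inj by (simp del: upt_Suc add: atLeastLessThanSuc_atLeastAtMost)
  moreover have "last (i # xs) = j"
    unfolding ixs using vm by (simp del: upt_Suc add: last_map)
  moreover have "walk_edges (i # xs) \<subseteq> E"
    unfolding ixs using walk_edges_map_upt[of 0 m v E] edge by simp
  moreover have "length xs = m" by (simp add: xs_def)
  ultimately show ?thesis unfolding vertex_lists_def by blast
qed

lemma graph_prob_has_path_le_walk_sum:
  assumes q: "\<And>e. 0 \<le> q e \<and> q e \<le> 1" and i: "i \<in> {1..n}" and m: "1 \<le> m"
  shows "graph_prob q n (\<lambda>E. has_path E m i j) \<le> walk_sum n (\<lambda>a b. q (min a b, max a b)) m i j"
proof -
  let ?p = "\<lambda>a b. q (min a b, max a b)"
  define X where "X = {xs\<in>vertex_lists n m. distinct (i # xs) \<and> last (i # xs) = j}"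
  have "graph_prob q n (\<lambda>E. has_path E m i j) \<le> (\<Sum>xs\<in>X. graph_prob q n (\<lambda>E. walk_edges (i # xs) \<subseteq> E))"
  proof (rule graph_prob_union_le[OF q])
    show "finite X" unfolding X_def using finite_vertex_lists by simp
    fix E assume "E \<subseteq> pairs n" "has_path E m i j"
    from has_path_imp_vertex_list[OF this m] show "\<exists>xs\<in>X. walk_edges (i # xs) \<subseteq> E"
      unfolding X_def by blast
  qed
  also have "\<dots> = (\<Sum>xs\<in>X. walk_weight ?p (i # xs))"
  proof (rule sum.cong[OF refl])
    fix xs assume "xs \<in> X"
    then have "distinct (i # xs)" "set (i # xs) \<subseteq> {1..n}" using i by (auto simp: X_def vertex_lists_def)
    then show "graph_prob q n (\<lambda>E. walk_edges (i # xs) \<subseteq> E) = walk_weight ?p (i # xs)"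
      by (simp add: graph_prob_superset walk_edges_subset_pairs prod_walk_edges)
  qed
  also have "\<dots> \<le> (\<Sum>xs\<in>{xs\<in>vertex_lists n m. last (i # xs) = j}. walk_weight ?p (i # xs))"
    using q by (intro sum_mono2) (auto simp: X_def finite_vertex_lists intro!: walk_weight_nonneg)
  also have "\<dots> = walk_sum n ?p m i j"
    unfolding walk_sum_def by (simp add: sum.inter_filter finite_vertex_lists)
  finally show ?thesis .
qed

lemma mu_eq:
  assumes tau: "2 < tau" "tau < 3" and C: "0 < C"
  shows "mu tau C = cF tau C * (tau - 1) / (tau - 2)"
proof -
  define a where "a = C powr (alpha tau)"
  have a: "0 < a" using C by (simp add: a_def)
  have below: "((\<lambda>x. 1 - paretoF tau C x) has_integral a) {0..a}"
  proof (rule has_integral_spike_finite[of "{a}"])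
    show "((\<lambda>x. 1) has_integral a) {0..a}"
      using has_integral_const_real[of "1::real" 0 a] a by simp
  qed (auto simp: paretoF_def a_def)
  have "((\<lambda>x. C * x powr (- (tau - 1))) has_integral C * (- (a powr (- (tau - 1) + 1)) / (- (tau - 1) + 1))) {a..}"
    by (intro has_integral_mult_right has_integral_powr_to_inf) (use tau a in auto)
  then have above: "((\<lambda>x. 1 - paretoF tau C x) has_integral C * a powr (2 - tau) / (tau - 2)) {a..}"
    by (rule has_integral_eq_rhs[OF has_integral_eq[rotated]]) (use tau in \<open>auto simp: paretoF_def a_def field_simps\<close>)
  have "((\<lambda>x. 1 - paretoF tau C x) has_integral (a + C * a powr (2 - tau) / (tau - 2))) ({0..a} \<union> {a..})"
    by (rule has_integral_Un[OF below above]) (auto intro: negligible_subset[of "{a}"])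
  also have "{0..a} \<union> {a..} = {0::real..}" using a by auto
  finally have "mu tau C = a + C * a powr (2 - tau) / (tau - 2)"
    unfolding mu_def by (rule integral_unique)
  also have "C * a powr (2 - tau) = C powr (1 + alpha tau * (2 - tau))"
    using C by (simp add: a_def powr_powr powr_add)
  also have "1 + alpha tau * (2 - tau) = alpha tau"
    using tau by (simp add: alpha_def field_simps)
  finally show ?thesis using tau by (simp add: a_def cF_def field_simps)
qed

lemma A_alpha_eq:
  assumes tau: "2 < tau" "tau < 3"
  shows "A_alpha (alpha tau) = Gamma (3 - tau) / (tau - 2)"
proof -
  define s where "s = tau - 2"
  have s: "0 < s" "s < 1" using tau by (auto simp: s_def)
  define f where "f z = (if z \<in> {0<..} then (1 - exp (- z)) * z powr (- (s + 1)) else 0)" for z :: real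
  have "(f has_integral (Gamma (1 - s) / s)) UNIV"
  proof (rule nn_integral_has_integral)
    have "(\<integral>\<^sup>+x. ennreal (f x) \<partial>lborel)
        = (\<integral>\<^sup>+z. ennreal (z powr (- (s + 1)) * (1 - exp (- z))) * indicator {0<..} z \<partial>lborel)"
      by (rule nn_integral_cong) (auto simp: f_def indicator_def mult.commute)
    also have "\<dots> = ennreal (Gamma (1 - s) / s)" by (rule nn_integral_powr_mult_one_minus_exp[OF s])
    finally show "(\<integral>\<^sup>+x. ennreal (f x) \<partial>lborel) = ennreal (Gamma (1 - s) / s)" .
    show "f \<in> borel_measurable borel" unfolding f_def by measurable
  qed (use s in \<open>auto simp: f_def\<close>)
  then have "((\<lambda>z. (1 - exp (- z)) * z powr (- (s + 1))) has_integral (Gamma (1 - s) / s)) {0<..}"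
    unfolding f_def by (subst has_integral_restrict_UNIV[symmetric]) simp
  moreover have "1 / alpha tau = s + 1" using tau by (simp add: alpha_def s_def)
  ultimately show ?thesis
    unfolding A_alpha_def s_def by (simp add: integral_unique)
qed

lemma powr_Suc_diff_le:
  fixes x a :: real
  assumes x: "0 < x" and a: "0 < a" "a < 1"
  shows "(x + 1) powr a - x powr a \<le> a * x powr (a - 1)"
proof -
  have "\<exists>z. x < z \<and> z < x + 1 \<and> (x + 1) powr a - x powr a = (x + 1 - x) * (a * z powr (a - 1))"
    by (rule MVT2) (use x in \<open>auto intro!: has_real_derivative_powr\<close>)
  then obtain z where z: "x < z" "z < x + 1" "(x + 1) powr a - x powr a = a * z powr (a - 1)"
    by auto
  have "z powr (a - 1) \<le> x powr (a - 1)" using z x a by (intro powr_mono2') auto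
  then show ?thesis using z a by simp
qed

lemma sum_powr_ge:
  fixes a :: real
  assumes a: "0 < a" "a < 1"
  shows "((real n + 1) powr (1 - a) - 1) / (1 - a) \<le> (\<Sum>i\<in>{1..n}. real i powr (- a))"
proof (induction n)
  case (Suc n)
  have "(real n + 1 + 1) powr (1 - a) - (real n + 1) powr (1 - a) \<le> (1 - a) * (real n + 1) powr (1 - a - 1)"
    by (rule powr_Suc_diff_le) (use a in auto)
  then have "((real n + 1 + 1) powr (1 - a) - (real n + 1) powr (1 - a)) / (1 - a) \<le> (real n + 1) powr (- a)"
    using a by (simp add: divide_le_eq mult.commute)
  moreover have "((real n + 1 + 1) powr (1 - a) - 1) / (1 - a) = ((real n + 1) powr (1 - a) - 1) / (1 - a)
      + ((real n + 1 + 1) powr (1 - a) - (real n + 1) powr (1 - a)) / (1 - a)"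
    by (simp add: diff_divide_distrib)
  moreover have "(\<Sum>i\<in>{1..Suc n}. real i powr (- a)) = (\<Sum>i\<in>{1..n}. real i powr (- a)) + (real n + 1) powr (- a)"
    by (simp add: add.commute)
  ultimately show ?case using Suc.IH by (simp add: add.commute)
qed simp

lemma ell_pos: "0 < C \<Longrightarrow> 1 \<le> n \<Longrightarrow> 0 < ell tau C n"
  unfolding ell_def weight_def cF_def by (intro sum_pos) auto

lemma ell_ge:
  assumes tau: "2 < tau" "tau < 3" and C: "0 < C" and n: "1 \<le> n"
  shows "mu tau C * (real n - real n powr (alpha tau)) \<le> ell tau C n"
proof -
  let ?a = "alpha tau"
  have a: "0 < ?a" "?a < 1" using tau by (auto simp: alpha_def field_simps)
  have cF: "0 < cF tau C" using C by (simp add: cF_def)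
  have "mu tau C * (real n - real n powr ?a) = cF tau C * real n powr ?a * ((real n powr (1 - ?a) - 1) / (1 - ?a))"
  proof -
    have "real n powr ?a * real n powr (1 - ?a) = real n"
      using n by (simp add: powr_add[symmetric])
    then show ?thesis
      using tau a by (simp add: mu_eq[OF tau C] alpha_def field_simps)
  qed
  also have "\<dots> \<le> cF tau C * real n powr ?a * (((real n + 1) powr (1 - ?a) - 1) / (1 - ?a))"
    using a cF by (intro mult_left_mono divide_right_mono diff_right_mono powr_mono2) auto
  also have "\<dots> \<le> cF tau C * real n powr ?a * (\<Sum>i\<in>{1..n}. real i powr (- ?a))"
    using a cF by (intro mult_left_mono sum_powr_ge) auto
  also have "\<dots> = ell tau C n"
    by (simp add: ell_def weight_def sum_distrib_left)
  finally show ?thesis .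
qed

lemma eventually_ell_ge:
  assumes tau: "2 < tau" "tau < 3" and C: "0 < C" and c: "c < 1"
  shows "eventually (\<lambda>n. c * mu tau C * real n \<le> ell tau C n) sequentially"
proof -
  have "((\<lambda>n. real n powr (alpha tau - 1)) \<longlongrightarrow> 0) sequentially"
    using tau by (intro tendsto_neg_powr filterlim_real_sequentially) (simp add: alpha_def field_simps)
  then have "eventually (\<lambda>n. real n powr (alpha tau - 1) < 1 - c) sequentially"
    using c by (intro order_tendstoD(2)) auto
  then show ?thesis
    using eventually_ge_at_top[of 1]
  proof eventually_elim
    case (elim n)
    have mu: "0 \<le> mu tau C" using tau C by (simp add: mu_eq cF_def)
    have "real n powr alpha tau = real n * real n powr (alpha tau - 1)"
      using elim by (simp add: powr_mult_base)
    also have "\<dots> \<le> real n * (1 - c)"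
      using elim by (intro mult_left_mono) auto
    finally have "c * real n \<le> real n - real n powr alpha tau" by (simp add: algebra_simps)
    from mult_left_mono[OF this mu] ell_ge[OF tau C elim(2)] show ?case
      by (simp add: mult_ac)
  qed
qed

lemma n_div_ell_powr_le:
  assumes tau: "2 < tau" "tau < 3" and C: "0 < C" and eps: "0 < eps" and n: "1 \<le> n"
    and ell: "(1 + eps) powr (- alpha tau) * mu tau C * real n \<le> ell tau C n"
  shows "(real n / ell tau C n) powr (1 / alpha tau) \<le> (1 + eps) / mu tau C powr (1 / alpha tau)"
proof -
  have al: "0 < alpha tau" using tau by (simp add: alpha_def)
  have mu: "0 < mu tau C" using tau C by (simp add: mu_eq cF_def)
  have l: "0 < ell tau C n" using ell_pos[OF C n] .
  have "real n / ell tau C n \<le> (1 + eps) powr alpha tau / mu tau C"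
    using ell mu l n eps by (simp add: field_simps powr_minus)
  then have "(real n / ell tau C n) powr (1 / alpha tau) \<le> ((1 + eps) powr alpha tau / mu tau C) powr (1 / alpha tau)"
    using l al by (intro powr_mono2) auto
  also have "\<dots> = (1 + eps) / mu tau C powr (1 / alpha tau)"
    using al eps mu by (simp add: powr_divide powr_powr)
  finally show ?thesis .
qed

lemma lambda_c_ratio_sq_ge:
  assumes tau: "2 < tau" "tau < 3" and C: "0 < C"
  shows "lam\<^sup>2 * cF tau C powr (2 / alpha tau) / mu tau C powr (1 / alpha tau) * Gamma (3 - tau) * (16 / (3 - tau))
    \<le> (lam / lambda_c tau C)\<^sup>2"
proof -
  have al: "0 < alpha tau" and eta: "0 < eta tau" using tau by (simp_all add: alpha_def eta_def)
  have "0 < mu tau C" using tau C by (simp add: mu_eq cF_def)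
  then have "0 < B_alpha tau C"
    using tau C al by (simp add: B_alpha_def A_alpha_eq cF_def)
  then have "(lambda_c tau C)\<^sup>2 = eta tau / (4 * B_alpha tau C)"
    using eta by (simp add: lambda_c_def)
  then have ratio: "(lam / lambda_c tau C)\<^sup>2 = lam\<^sup>2 * cF tau C powr (2 / alpha tau) / mu tau C powr (1 / alpha tau)
      * Gamma (3 - tau) * (4 / ((tau - 2) * alpha tau * eta tau))"
    using tau by (simp add: power_divide B_alpha_def A_alpha_eq field_simps)
  have "(tau - 2) * 16 \<le> 4 * (tau - 1)\<^sup>2"
    using zero_le_power2[of "tau - 3"] by (simp add: power2_eq_square algebra_simps)
  then have "(tau - 2) * 16 / ((tau - 2) * (3 - tau)) \<le> 4 * (tau - 1)\<^sup>2 / ((tau - 2) * (3 - tau))"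
    using tau by (intro divide_right_mono) auto
  moreover have "(tau - 2) * alpha tau * eta tau = (tau - 2) * (3 - tau) / (tau - 1)\<^sup>2"
    using tau by (simp add: alpha_def eta_def power2_eq_square)
  moreover have "(tau - 2) * 16 / ((tau - 2) * (3 - tau)) = 16 / (3 - tau)"
    by (rule nonzero_mult_divide_mult_cancel_left) (use tau in simp)
  ultimately have "16 / (3 - tau) \<le> 4 / ((tau - 2) * alpha tau * eta tau)"
    using tau by simp
  then show ?thesis
    unfolding ratio using tau by (intro mult_left_mono) auto
qed

definition kappa :: "real \<Rightarrow> real \<Rightarrow> nat \<Rightarrow> real" where
  "kappa tau C n = cF tau C ^ 2 * real n powr (2 * alpha tau) / ell tau C n"

lemma edge_prob_nonneg_le_1:
  assumes "0 \<le> pr" "pr \<le> 1"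
  shows "0 \<le> edge_prob tau C pr n e \<and> edge_prob tau C pr n e \<le> 1"
proof -
  have "0 \<le> weight tau C n (fst e) * weight tau C n (snd e) / ell tau C n"
    by (simp add: weight_def cF_def ell_def sum_nonneg)
  then have "0 \<le> 1 - exp (- weight tau C n (fst e) * weight tau C n (snd e) / ell tau C n)"
    "1 - exp (- weight tau C n (fst e) * weight tau C n (snd e) / ell tau C n) \<le> 1"
    by (simp_all add: minus_divide_left[symmetric])
  then show ?thesis using assms by (simp add: edge_prob_def mult_le_one)
qed

lemma edge_prob_eq_nr_kernel:
  assumes "1 \<le> a" "1 \<le> c"
  shows "edge_prob tau C pr n (min a c, max a c) = pr * nr_kernel (kappa tau C n) (alpha tau) (real a * real c)"
proof -
  have "real (min a c) powr (- alpha tau) * real (max a c) powr (- alpha tau) = (real a * real c) powr (- alpha tau)"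
    using assms by (simp add: powr_mult min_def max_def)
  moreover have "real n powr alpha tau * real n powr alpha tau = real n powr (2 * alpha tau)"
    by (simp add: powr_add[symmetric])
  ultimately have "weight tau C n (min a c) * weight tau C n (max a c) / ell tau C n
      = kappa tau C n * (real a * real c) powr (- alpha tau)"
    by (simp add: weight_def kappa_def power2_eq_square mult_ac)
  then show ?thesis
    by (simp add: edge_prob_def nr_kernel_def minus_divide_left[symmetric])
qed

lemma kappa_scaling:
  assumes tau: "2 < tau" "tau < 3" and C: "0 < C" and n: "1 \<le> n"
  shows "(lam * real n powr (- eta_s tau))\<^sup>2 * kappa tau C n powr (1 / alpha tau)
    = lam\<^sup>2 * cF tau C powr (2 / alpha tau) * (real n / ell tau C n) powr (1 / alpha tau)"
proof -
  have n_pos: "0 < real n" and l: "0 < ell tau C n" using n ell_pos[OF C n] by auto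
  have cF: "0 < cF tau C" using C by (simp add: cF_def)
  have al: "0 < alpha tau" using tau by (simp add: alpha_def)
  have "(cF tau C ^ 2) powr (1 / alpha tau) = cF tau C powr (2 / alpha tau)"
    using cF by (simp add: powr_powr flip: powr_numeral)
  moreover have "(real n powr (2 * alpha tau)) powr (1 / alpha tau) = real n powr 2"
    using al by (simp add: powr_powr)
  ultimately have "kappa tau C n powr (1 / alpha tau)
      = cF tau C powr (2 / alpha tau) * real n powr 2 / ell tau C n powr (1 / alpha tau)"
    using cF n_pos l by (simp add: kappa_def powr_divide powr_mult)
  moreover have "(real n powr (- eta_s tau))\<^sup>2 * real n powr 2 = real n powr (1 / alpha tau)"
  proof -
    have "(real n powr (- eta_s tau))\<^sup>2 * real n powr 2 = real n powr (2 * - eta_s tau + 2)"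
      using n_pos by (subst powr_add) (simp add: powr_power)
    also have "2 * - eta_s tau + 2 = 1 / alpha tau" by (simp add: eta_s_def alpha_def field_simps)
    finally show ?thesis .
  qed
  ultimately show ?thesis
    using n_pos l by (simp add: power_mult_distrib powr_divide)
qed

lemma path_prob_le_power:
  assumes C: "0 < C" and tau: "2 < tau" "tau < 3" and lam: "0 \<le> lam" "lam * real n powr (- eta_s tau) \<le> 1"
    and n: "1 \<le> n" and b: "0 < b" "b < 1" "1 - b < alpha tau" "b < alpha tau"
    and k: "1 \<le> k" and i: "i \<in> {1..n}" and j: "j \<in> {1..n}"
  defines "ka \<equiv> kappa tau C n" and "pr \<equiv> lam * real n powr (- eta_s tau)"
  shows "path_prob tau C lam n (2 * k) i j
    \<le> (pr\<^sup>2 * nr_kernel_moment ka (alpha tau) b * nr_kernel_moment ka (alpha tau) (1 - b)) ^ k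
        / (real (min i j) powr (1 - b) * real (max i j) powr b)"
proof -
  have pr: "0 \<le> pr" "pr \<le> 1" using lam by (simp_all add: pr_def)
  define p where "p a c = edge_prob tau C pr n (min a c, max a c)" for a c
  interpret nr_dominated_kernel n p pr ka "alpha tau"
  proof
    show "0 \<le> p a c \<and> p a c \<le> pr * nr_kernel ka (alpha tau) (real a * real c)" if "a \<in> {1..n}" "c \<in> {1..n}" for a c
      using that edge_prob_nonneg_le_1[OF pr, of tau C n "(min a c, max a c)"]
      by (simp add: p_def ka_def edge_prob_eq_nr_kernel)
    show "0 < ka" using C n ell_pos[OF C n] by (simp add: ka_def kappa_def cF_def)
    show "0 < alpha tau" using tau by (simp add: alpha_def)
  qed (use pr in simp)
  have "path_prob tau C lam n (2 * k) i j \<le> walk_sum n p (2 * k) i j"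
    unfolding path_prob_def p_def pr_def[symmetric]
    by (rule graph_prob_has_path_le_walk_sum) (use edge_prob_nonneg_le_1[OF pr] i k in auto)
  also have "\<dots> \<le> (pr\<^sup>2 * nr_kernel_moment ka (alpha tau) b * nr_kernel_moment ka (alpha tau) (1 - b)) ^ k
        / (real (min i j) powr (1 - b) * real (max i j) powr b)"
    by (rule walk_sum_even_le_min_max[OF b k i j])
  finally show ?thesis .
qed

text \<open>Bounds \<open>Gamma (1 - b/alpha) Gamma (1 - (1 - b)/alpha) / (b (1 - b) Gamma (3 - tau))\<close>
  (by \<open>Gamma_mult_Gamma_le\<close>); at \<open>b = 1/2\<close> it equals \<open>16 / (3 - tau)\<close>.\<close>

definition exponent_penalty :: "real \<Rightarrow> real \<Rightarrow> real" where
  "exponent_penalty tau b = (1 / (1 - b / alpha tau) + 1 / (1 - (1 - b) / alpha tau)) / (b * (1 - b))"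

lemma exists_exponent_penalty_le:
  assumes tau: "2 < tau" "tau < 3" and eps: "0 < eps"
  shows "\<exists>b. 1/2 < b \<and> b < alpha tau \<and> exponent_penalty tau b \<le> (1 + eps) * (16 / (3 - tau))"
proof -
  have half: "1 - (1/2) / alpha tau = (3 - tau) / 2" "1 - (1 - 1/2) / alpha tau = (3 - tau) / 2"
    using tau by (simp_all add: alpha_def field_simps)
  have "exponent_penalty tau (1/2) = (2 / ((3 - tau) / 2)) * 4"
    unfolding exponent_penalty_def half by simp
  then have "exponent_penalty tau (1/2) < (1 + eps) * (16 / (3 - tau))"
    using tau eps by (simp add: field_simps)
  moreover have "isCont (exponent_penalty tau) (1/2)"
    unfolding exponent_penalty_def using tau half by (intro continuous_intros) (auto simp: alpha_def)
  moreover have "1/2 < alpha tau" using tau by (simp add: alpha_def field_simps)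
  ultimately obtain b where "1/2 < b" "b < alpha tau" "exponent_penalty tau b < (1 + eps) * (16 / (3 - tau))"
    using isCont_exists_right_less by blast
  then show ?thesis by (auto intro: less_imp_le)
qed

lemma two_step_factor_le:
  assumes tau: "2 < tau" "tau < 3" and C: "0 < C" and eps: "0 < eps" and n: "1 \<le> n"
    and ell: "(1 + eps) powr (- alpha tau) * mu tau C * real n \<le> ell tau C n"
    and b: "0 < b" "b < 1" "b < alpha tau" "1 - b < alpha tau"
    and penalty: "exponent_penalty tau b \<le> (1 + eps) * (16 / (3 - tau))"
  shows "(lam * real n powr (- eta_s tau))\<^sup>2 * nr_kernel_moment (kappa tau C n) (alpha tau) b
      * nr_kernel_moment (kappa tau C n) (alpha tau) (1 - b) \<le> (1 + eps)\<^sup>2 * (lam / lambda_c tau C)\<^sup>2"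
proof -
  define al where "al = alpha tau"
  define x where "x = 1 - b / al"
  define y where "y = 1 - (1 - b) / al"
  have al: "0 < al" using tau by (simp add: al_def alpha_def)
  have xy: "0 < x" "x < 1" "0 < y" "y < 1" using b al by (auto simp: x_def y_def al_def field_simps)
  have "x + y = 3 - tau" using tau by (simp add: x_def y_def al_def alpha_def field_simps)
  then have "Gamma x * Gamma y / (b * (1 - b)) \<le> (1 / x + 1 / y) * Gamma (3 - tau) / (b * (1 - b))"
    using Gamma_mult_Gamma_le[OF xy] b by (intro divide_right_mono) auto
  also have "\<dots> = exponent_penalty tau b * Gamma (3 - tau)"
    by (simp add: exponent_penalty_def x_def y_def al_def)
  also have "\<dots> \<le> (1 + eps) * (16 / (3 - tau)) * Gamma (3 - tau)"
    using penalty tau by (intro mult_right_mono) auto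
  finally have Gamma_xy: "Gamma x * Gamma y / (b * (1 - b)) \<le> (1 + eps) * (16 / (3 - tau)) * Gamma (3 - tau)" .
  have ratio: "(real n / ell tau C n) powr (1 / al) \<le> (1 + eps) / mu tau C powr (1 / al)"
    using n_div_ell_powr_le[OF tau C eps n ell] by (simp add: al_def)
  have "(lam * real n powr (- eta_s tau))\<^sup>2 * nr_kernel_moment (kappa tau C n) al b
      * nr_kernel_moment (kappa tau C n) al (1 - b)
      = (lam * real n powr (- eta_s tau))\<^sup>2 * kappa tau C n powr (1 / al) * (Gamma x * Gamma y / (b * (1 - b)))"
    by (simp only: mult.assoc nr_kernel_moment_mult times_divide_eq_right x_def y_def)
  also have "\<dots> = lam\<^sup>2 * cF tau C powr (2 / al) * (real n / ell tau C n) powr (1 / al)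
      * (Gamma x * Gamma y / (b * (1 - b)))"
    by (simp only: kappa_scaling[OF tau C n] al_def)
  also have "\<dots> \<le> lam\<^sup>2 * cF tau C powr (2 / al) * ((1 + eps) / mu tau C powr (1 / al))
      * ((1 + eps) * (16 / (3 - tau)) * Gamma (3 - tau))"
    using ratio Gamma_xy xy eps b by (intro mult_mono mult_left_mono) (auto simp: Gamma_real_pos less_imp_le)
  also have "\<dots> = (1 + eps)\<^sup>2 *
      (lam\<^sup>2 * cF tau C powr (2 / al) / mu tau C powr (1 / al) * Gamma (3 - tau) * (16 / (3 - tau)))"
    by (simp add: power2_eq_square)
  also have "\<dots> \<le> (1 + eps)\<^sup>2 * (lam / lambda_c tau C)\<^sup>2"
    unfolding al_def by (intro mult_left_mono lambda_c_ratio_sq_ge[OF tau C]) auto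
  finally show ?thesis by (simp add: al_def)
qed

lemma eventually_ell_ge_and_pi_le_1:
  assumes tau: "2 < tau" "tau < 3" and C: "0 < C" and eps: "0 < eps"
  shows "eventually (\<lambda>n. (1 + eps) powr (- alpha tau) * mu tau C * real n \<le> ell tau C n
    \<and> lam * real n powr (- eta_s tau) \<le> 1) sequentially"
proof (rule eventually_conj)
  show "eventually (\<lambda>n. (1 + eps) powr (- alpha tau) * mu tau C * real n \<le> ell tau C n) sequentially"
    using tau eps by (intro eventually_ell_ge[OF tau C] powr_less_one) (auto simp: alpha_def)
  have "((\<lambda>n. lam * real n powr (- eta_s tau)) \<longlonglongrightarrow> 0)"
    using tau by (intro tendsto_mult_right_zero tendsto_neg_powr filterlim_real_sequentially) (simp add: eta_s_def)
  then show "eventually (\<lambda>n. lam * real n powr (- eta_s tau) \<le> 1) sequentially"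
    by (rule eventually_mono[OF order_tendstoD(2)[of _ 0 _ 1]]) auto
qed

theorem proposition3p10:
  fixes tau C eps lam :: real
  assumes "2 < tau" "tau < 3" "0 < C" "0 < eps" "0 < lam" "lam < lambda_c tau C"
  shows "\<exists>n0::nat. n0 \<ge> 1 \<and> (\<exists>b::real. 1/2 < b \<and> b < alpha tau \<and>
           (\<forall>n\<ge>n0. \<forall>k::nat\<ge>1. \<forall>i\<in>{1..n}. \<forall>j\<in>{1..n}. i \<noteq> j \<longrightarrow>
              path_prob tau C lam n (2 * k) i j
                \<le> (1 + eps) ^ (2 * k) * (lam / lambda_c tau C) ^ (2 * k)
                   / (real (min i j) powr (1 - b) * real (max i j) powr b)))"
proof -
  note tau = assms(1,2) and C = assms(3) and eps = assms(4) and lam = assms(5)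
  obtain b where b: "1/2 < b" "b < alpha tau" and penalty: "exponent_penalty tau b \<le> (1 + eps) * (16 / (3 - tau))"
    using exists_exponent_penalty_le[OF tau eps] by blast
  have "alpha tau < 1" using tau by (simp add: alpha_def field_simps)
  then have b': "0 < b" "b < 1" "1 - b < alpha tau" using b by auto
  obtain N where N: "\<And>n. N \<le> n \<Longrightarrow> (1 + eps) powr (- alpha tau) * mu tau C * real n \<le> ell tau C n
      \<and> lam * real n powr (- eta_s tau) \<le> 1"
    using eventually_ell_ge_and_pi_le_1[OF tau C eps, of lam] unfolding eventually_sequentially by blast
  show ?thesis
  proof (intro exI[of _ "max N 1"] conjI exI[of _ b] allI impI ballI)
    fix n k i j :: nat
    assume n: "max N 1 \<le> n" and k: "1 \<le> k" and i: "i \<in> {1..n}" and j: "j \<in> {1..n}"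
    \<comment> \<open>The bound holds for every \<open>lam > 0\<close>; \<open>lam < lambda_c tau C\<close> only makes it
      summable in \<open>k\<close>.\<close>
    have "path_prob tau C lam n (2 * k) i j
      \<le> ((lam * real n powr (- eta_s tau))\<^sup>2 * nr_kernel_moment (kappa tau C n) (alpha tau) b
          * nr_kernel_moment (kappa tau C n) (alpha tau) (1 - b)) ^ k
        / (real (min i j) powr (1 - b) * real (max i j) powr b)"
      using N[of n] n lam by (intro path_prob_le_power[OF C tau _ _ _ b' b(2) k i j]) auto
    also have "\<dots> \<le> ((1 + eps)\<^sup>2 * (lam / lambda_c tau C)\<^sup>2) ^ k
        / (real (min i j) powr (1 - b) * real (max i j) powr b)"
      using N[of n] n i j b' b(2) penalty
      by (intro divide_right_mono power_mono two_step_factor_le[OF tau C eps])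
         (auto simp: nr_kernel_moment_nonneg)
    finally show "path_prob tau C lam n (2 * k) i j
        \<le> (1 + eps) ^ (2 * k) * (lam / lambda_c tau C) ^ (2 * k)
          / (real (min i j) powr (1 - b) * real (max i j) powr b)"
      by (simp add: power_mult power_mult_distrib)
  qed (use b in auto)
qed

end
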